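(* Let $\beta<0,\gamma>0$, let $N\in2^{\mathbb{Z}}$ with $N\ge a$, and let $$K(x,t)=\int_{\mathbb{R}}e^{-it\phi(\xi)+ix\xi}\chi_{[N,4N]}(|\xi|)\,d\xi.$$ Then for every $p\ge7$, $$\|K\|_{L^{p/2}_xL^\infty_t}\le C N^{\frac{p-2}{p}},$$ with $C$ independent of $N$.
   Context: $\phi(\xi)=\beta\xi^3+\frac{\gamma}{\xi}$. $A=\max\{1,|\frac{6\gamma}{7\beta}|^{1/4},|\frac{\gamma}{3\beta}|^{1/2},|\frac{\gamma}{\beta}|,100|\beta|,100|\gamma|\}$ and $a=2^{[A]}$, $[A]$ the integer part. $\|f\|_{L^p_xL^q_t}=\big(\int(\int|f|^qdt)^{p/q}dx\big)^{1/p}$; $\chi_E$ is the indicator function of $E$. *)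

theory Defs
  imports "HOL-Analysis.Analysis" "HOL-Probability.Essential_Supremum"
begin

definition phase :: "real \<Rightarrow> real \<Rightarrow> real \<Rightarrow> real" where
  "phase \<beta> \<gamma> \<xi> = \<beta> * \<xi>^3 + \<gamma> / \<xi>"

definition A_const :: "real \<Rightarrow> real \<Rightarrow> real" where
  "A_const \<beta> \<gamma> = Max {1, \<bar>6*\<gamma> / (7*\<beta>)\<bar> powr (1/4), \<bar>\<gamma> / (3*\<beta>)\<bar> powr (1/2),
                       \<bar>\<gamma> / \<beta>\<bar>, 100*\<bar>\<beta>\<bar>, 100*\<bar>\<gamma>\<bar>}"

definition a_const :: "real \<Rightarrow> real \<Rightarrow> real" where
  "a_const \<beta> \<gamma> = 2 powr (real_of_int \<lfloor>A_const \<beta> \<gamma>\<rfloor>)"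

definition kernelK :: "real \<Rightarrow> real \<Rightarrow> real \<Rightarrow> real \<Rightarrow> real \<Rightarrow> complex" where
  "kernelK \<beta> \<gamma> N x t = (LINT \<xi>|lborel.
     indicator {\<xi>. N \<le> \<bar>\<xi>\<bar> \<and> \<bar>\<xi>\<bar> \<le> 4*N} \<xi> *\<^sub>R
       exp (- \<i> * complex_of_real (t * phase \<beta> \<gamma> \<xi>) + \<i> * complex_of_real (x * \<xi>)))"

definition Linf_t :: "(real \<Rightarrow> real \<Rightarrow> complex) \<Rightarrow> real \<Rightarrow> ereal" where
  "Linf_t f x = esssup lborel (\<lambda>t. ereal (cmod (f x t)))"

definition norm_Lr_Linf :: "real \<Rightarrow> (real \<Rightarrow> real \<Rightarrow> complex) \<Rightarrow> ereal" where
  "norm_Lr_Linf r f =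
     (if (AE x in lborel. Linf_t f x < \<infinity>) \<and>
         (\<integral>\<^sup>+ x. ennreal (real_of_ereal (Linf_t f x) powr r) \<partial>lborel) < \<infinity>
      then ereal ((enn2real (\<integral>\<^sup>+ x. ennreal (real_of_ereal (Linf_t f x) powr r) \<partial>lborel)) powr (1/r))
      else \<infinity>)"

end

theory Submission
  imports Defs
begin

(* The kernel splits as K(x,t) = J(x,t) + J(-x,-t), where J is the same oscillatory integral
   over [N,4N] only. For \<xi> \<ge> a the phase satisfies \<phi>''(\<xi>) \<le> -c \<xi> with c > 0, so
   van der Corput's lemmas bound J uniformly in t: trivially by 3N, and by C N (N|x|)^(-1/2)
   once N|x| \<ge> 1 (if |t| is small compared with |x|/N^2 the phase x\<xi> - t\<phi>(\<xi>) has derivative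
   at least |x|/2, otherwise its second derivative is at least |t| c N). Hence
   sup_t |K(x,t)| \<le> N b(Nx) for a fixed b that is bounded and decays like |y|^(-1/2), so b lies
   in L^q for q = p/2 > 2, and the change of variables y = Nx gives
   ||K||_{L^q_x L^\<infinity>_t} \<le> ||b||_q N^(1 - 1/q) = ||b||_q N^((p-2)/p). *)

lemma has_vector_derivative_cis:
  assumes "(f has_real_derivative f') (at x within S)"
  shows "((\<lambda>x. cis (f x)) has_vector_derivative (\<i> * of_real f' * cis (f x))) (at x within S)"
  using has_derivative_cis[OF assms[unfolded has_field_derivative_def]]
  by (simp add: has_vector_derivative_def scaleR_conv_of_real ac_simps)

lemma norm_integral_cis_le_length:
  fixes \<psi> :: "real \<Rightarrow> real"
  assumes "a \<le> b" and "continuous_on {a..b} \<psi>"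
  shows "norm (integral {a..b} (\<lambda>\<xi>. cis (\<psi> \<xi>))) \<le> b - a"
proof -
  have "norm (integral {a..b} (\<lambda>\<xi>. cis (\<psi> \<xi>))) \<le> integral {a..b} (\<lambda>\<xi>. 1::real)"
    using assms by (intro integral_norm_bound_integral) (auto intro!: integrable_continuous_real continuous_intros)
  then show ?thesis using assms by simp
qed

lemma norm_integral_cis_uminus:
  "norm (integral {a..b} (\<lambda>\<xi>. cis (- \<psi> \<xi>))) = norm (integral {a..b} (\<lambda>\<xi>. cis (\<psi> \<xi>)))"
proof -
  have "integral {a..b} (\<lambda>\<xi>. cis (- \<psi> \<xi>)) = cnj (integral {a..b} (\<lambda>\<xi>. cis (\<psi> \<xi>)))"
    by (simp add: integral_cnj cis_cnj)
  then show ?thesis by simp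
qed

text \<open>Integrate by parts against \<open>cis \<psi> = (cis \<psi>)' / (\<i> \<psi>')\<close>: the boundary terms
  contribute \<open>2 / l\<close>, and since \<open>\<psi>'\<close> is monotone the remaining integral is at most the
  total variation of \<open>1 / \<psi>'\<close>, another \<open>2 / l\<close>.\<close>

lemma van_der_Corput_first_derivative_convex:
  fixes \<psi> \<psi>' \<psi>'' :: "real \<Rightarrow> real"
  assumes "a \<le> b" and "l > 0"
    and \<psi>': "\<And>\<xi>. \<xi> \<in> {a..b} \<Longrightarrow> (\<psi> has_real_derivative \<psi>' \<xi>) (at \<xi>)"
    and \<psi>'': "\<And>\<xi>. \<xi> \<in> {a..b} \<Longrightarrow> (\<psi>' has_real_derivative \<psi>'' \<xi>) (at \<xi>)"
    and cont: "continuous_on {a..b} \<psi>''"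
    and convex: "\<And>\<xi>. \<xi> \<in> {a..b} \<Longrightarrow> \<psi>'' \<xi> \<ge> 0"
    and slope: "\<And>\<xi>. \<xi> \<in> {a..b} \<Longrightarrow> l \<le> \<bar>\<psi>' \<xi>\<bar>"
  shows "norm (integral {a..b} (\<lambda>\<xi>. cis (\<psi> \<xi>))) \<le> 4 / l"
proof -
  have nz: "\<psi>' \<xi> \<noteq> 0" if "\<xi> \<in> {a..b}" for \<xi> using slope[OF that] \<open>l > 0\<close> by auto
  define H where "H \<xi> = - 1 / \<psi>' \<xi>" for \<xi>
  define F where "F \<xi> = cis (\<psi> \<xi>) * (\<i> * of_real (H \<xi>))" for \<xi>
  define G where "G \<xi> = cis (\<psi> \<xi>) * (\<i> * of_real (\<psi>'' \<xi> / (\<psi>' \<xi>)\<^sup>2))" for \<xi>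
  have H_bound: "\<bar>H \<xi>\<bar> \<le> 1 / l" if "\<xi> \<in> {a..b}" for \<xi>
    using slope[OF that] \<open>l > 0\<close> by (simp add: H_def frac_le)
  have dH: "(H has_real_derivative \<psi>'' \<xi> / (\<psi>' \<xi>)\<^sup>2) (at \<xi>)" if "\<xi> \<in> {a..b}" for \<xi>
    unfolding H_def using \<psi>''[OF that] nz[OF that]
    by (auto intro!: derivative_eq_intros simp: power2_eq_square)
  have H_integral: "((\<lambda>\<xi>. \<psi>'' \<xi> / (\<psi>' \<xi>)\<^sup>2) has_integral H b - H a) {a..b}"
    using dH by (intro fundamental_theorem_of_calculus[OF \<open>a \<le> b\<close>])
      (simp add: has_real_derivative_iff_has_vector_derivative[symmetric] has_field_derivative_at_within)
  have dF: "(F has_vector_derivative (cis (\<psi> \<xi>) + G \<xi>)) (at \<xi> within {a..b})"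
    if "\<xi> \<in> {a..b}" for \<xi>
  proof -
    have "(F has_vector_derivative cis (\<psi> \<xi>) * (\<i> * of_real (\<psi>'' \<xi> / (\<psi>' \<xi>)\<^sup>2))
             + \<i> * of_real (\<psi>' \<xi>) * cis (\<psi> \<xi>) * (\<i> * of_real (H \<xi>))) (at \<xi> within {a..b})"
      unfolding F_def
      using has_vector_derivative_mult[OF has_vector_derivative_const
          has_vector_derivative_of_real[OF has_field_derivative_at_within[OF dH[OF that]]], of \<i>]
      by (intro has_vector_derivative_mult has_vector_derivative_cis
          has_field_derivative_at_within[OF \<psi>'[OF that]]) simp
    moreover have "\<i> * of_real (\<psi>' \<xi>) * cis (\<psi> \<xi>) * (\<i> * of_real (H \<xi>)) = cis (\<psi> \<xi>)"
    proof -
      have "of_real (\<psi>' \<xi>) * of_real (H \<xi>) = (-1 :: complex)"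
        using nz[OF that] by (simp add: H_def flip: of_real_mult)
      then show ?thesis by (simp add: algebra_simps)
    qed
    ultimately show ?thesis by (simp add: G_def add.commute)
  qed
  have cont_\<psi>: "continuous_on {a..b} \<psi>" and cont_\<psi>': "continuous_on {a..b} \<psi>'"
    using \<psi>' \<psi>'' by (meson DERIV_isCont continuous_at_imp_continuous_on)+
  have G_int: "G integrable_on {a..b}"
    unfolding G_def using nz cont_\<psi> cont_\<psi>' cont
    by (auto intro!: integrable_continuous_real continuous_intros)
  have cis_int: "(\<lambda>\<xi>. cis (\<psi> \<xi>)) integrable_on {a..b}"
    using cont_\<psi> by (auto intro!: integrable_continuous_real continuous_intros)
  have parts: "integral {a..b} (\<lambda>\<xi>. cis (\<psi> \<xi>)) = (F b - F a) - integral {a..b} G"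
    using integral_add[OF cis_int G_int] fundamental_theorem_of_calculus[OF \<open>a \<le> b\<close> dF]
    by (simp add: integral_unique)
  have "norm (integral {a..b} G) \<le> integral {a..b} (\<lambda>\<xi>. \<psi>'' \<xi> / (\<psi>' \<xi>)\<^sup>2)"
  proof (rule integral_norm_bound_integral)
    show "G integrable_on {a..b}" by (fact G_int)
    show "(\<lambda>\<xi>. \<psi>'' \<xi> / (\<psi>' \<xi>)\<^sup>2) integrable_on {a..b}"
      using H_integral by blast
    show "norm (G \<xi>) \<le> \<psi>'' \<xi> / (\<psi>' \<xi>)\<^sup>2" if "\<xi> \<in> {a..b}" for \<xi>
      using convex[OF that] by (simp only: G_def norm_mult norm_cis norm_ii norm_of_real) simp
  qed
  also have "\<dots> = H b - H a"
    using H_integral by (rule integral_unique)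
  also have "\<dots> \<le> 2 / l" using H_bound[of a] H_bound[of b] \<open>a \<le> b\<close> by simp
  finally have "norm (integral {a..b} G) \<le> 2 / l" .
  moreover have "norm (F \<xi>) = \<bar>H \<xi>\<bar>" for \<xi>
    by (simp only: F_def norm_mult norm_cis norm_ii norm_of_real mult_1_left)
  then have "norm (F b - F a) \<le> 2 / l"
    using H_bound[of a] H_bound[of b] \<open>a \<le> b\<close> norm_triangle_ineq4[of "F b" "F a"] by simp
  ultimately show ?thesis
    unfolding parts using norm_triangle_ineq4[of "F b - F a" "integral {a..b} G"] by linarith
qed

lemma van_der_Corput_first_derivative:
  fixes \<psi> \<psi>' \<psi>'' :: "real \<Rightarrow> real"
  assumes "a \<le> b" and "l > 0"
    and \<psi>': "\<And>\<xi>. \<xi> \<in> {a..b} \<Longrightarrow> (\<psi> has_real_derivative \<psi>' \<xi>) (at \<xi>)"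
    and \<psi>'': "\<And>\<xi>. \<xi> \<in> {a..b} \<Longrightarrow> (\<psi>' has_real_derivative \<psi>'' \<xi>) (at \<xi>)"
    and cont: "continuous_on {a..b} \<psi>''"
    and monotone: "(\<forall>\<xi>\<in>{a..b}. \<psi>'' \<xi> \<ge> 0) \<or> (\<forall>\<xi>\<in>{a..b}. \<psi>'' \<xi> \<le> 0)"
    and slope: "\<And>\<xi>. \<xi> \<in> {a..b} \<Longrightarrow> l \<le> \<bar>\<psi>' \<xi>\<bar>"
  shows "norm (integral {a..b} (\<lambda>\<xi>. cis (\<psi> \<xi>))) \<le> 4 / l"
  using monotone
proof
  assume "\<forall>\<xi>\<in>{a..b}. \<psi>'' \<xi> \<ge> 0"
  then show ?thesis
    using van_der_Corput_first_derivative_convex[OF assms(1-5) _ slope] by blast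
next
  assume "\<forall>\<xi>\<in>{a..b}. \<psi>'' \<xi> \<le> 0"
  then have "norm (integral {a..b} (\<lambda>\<xi>. cis (- \<psi> \<xi>))) \<le> 4 / l"
    using \<psi>' \<psi>'' cont slope
    by (intro van_der_Corput_first_derivative_convex[OF assms(1,2),
          where \<psi>'="\<lambda>\<xi>. - \<psi>' \<xi>" and \<psi>''="\<lambda>\<xi>. - \<psi>'' \<xi>"])
      (auto intro!: derivative_intros continuous_intros)
  then show ?thesis by (simp only: norm_integral_cis_uminus)
qed

lemma increment_ge_of_derivative_ge:
  fixes f f' :: "real \<Rightarrow> real"
  assumes "\<And>\<xi>. \<xi> \<in> {a..b} \<Longrightarrow> (f has_real_derivative f' \<xi>) (at \<xi>)"
    and "\<And>\<xi>. \<xi> \<in> {a..b} \<Longrightarrow> \<mu> \<le> f' \<xi>"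
    and "a \<le> x" "x \<le> y" "y \<le> b"
  shows "\<mu> * (y - x) \<le> f y - f x"
proof (cases "x = y")
  case False
  then obtain z where z: "x < z" "z < y" "f y - f x = (y - x) * f' z"
    using MVT2[of x y f f'] assms by force
  then have "\<mu> \<le> f' z" using assms by auto
  then show ?thesis using z by (simp add: mult.commute mult_right_mono)
qed simp

text \<open>Away from an interval of length \<open>\<delta> / \<mu>\<close> at the left end, \<open>\<psi>' \<ge> \<delta>\<close>;
  the choice \<open>\<delta> = 2 sqrt \<mu>\<close> balances the two resulting bounds \<open>\<delta> / \<mu>\<close> and \<open>4 / \<delta>\<close>.\<close>

lemma van_der_Corput_second_derivative_nonneg_start:
  fixes \<psi> \<psi>' \<psi>'' :: "real \<Rightarrow> real"
  assumes "a \<le> b" and "\<mu> > 0"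
    and \<psi>': "\<And>\<xi>. \<xi> \<in> {a..b} \<Longrightarrow> (\<psi> has_real_derivative \<psi>' \<xi>) (at \<xi>)"
    and \<psi>'': "\<And>\<xi>. \<xi> \<in> {a..b} \<Longrightarrow> (\<psi>' has_real_derivative \<psi>'' \<xi>) (at \<xi>)"
    and cont: "continuous_on {a..b} \<psi>''"
    and curv: "\<And>\<xi>. \<xi> \<in> {a..b} \<Longrightarrow> \<mu> \<le> \<psi>'' \<xi>"
    and start: "\<psi>' a \<ge> 0"
  shows "norm (integral {a..b} (\<lambda>\<xi>. cis (\<psi> \<xi>))) \<le> 4 / sqrt \<mu>"
proof -
  define \<delta> where "\<delta> = 2 * sqrt \<mu>"
  define m where "m = a + \<delta> / \<mu>"
  have \<delta>: "\<delta> > 0" and balance: "\<delta> / \<mu> + 4 / \<delta> = 4 / sqrt \<mu>"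
    using \<open>\<mu> > 0\<close> real_sqrt_pow2[of \<mu>]
    by (auto simp: \<delta>_def field_simps power2_eq_square)
  have cont_\<psi>: "continuous_on {a..b} \<psi>"
    using \<psi>' by (meson DERIV_isCont continuous_at_imp_continuous_on)
  show ?thesis
  proof (cases "b \<le> m")
    case True
    then have "norm (integral {a..b} (\<lambda>\<xi>. cis (\<psi> \<xi>))) \<le> \<delta> / \<mu>"
      using norm_integral_cis_le_length[OF \<open>a \<le> b\<close> cont_\<psi>] by (simp add: m_def)
    moreover have "0 < 4 / \<delta>" using \<delta> by simp
    ultimately show ?thesis using balance by linarith
  next
    case False
    have am: "a \<le> m" "m \<le> b" using False \<delta> \<open>\<mu> > 0\<close> by (auto simp: m_def)
    have near: "norm (integral {a..m} (\<lambda>\<xi>. cis (\<psi> \<xi>))) \<le> \<delta> / \<mu>"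
      using norm_integral_cis_le_length[OF am(1) continuous_on_subset[OF cont_\<psi>]] am
      by (simp add: m_def)
    have far: "norm (integral {m..b} (\<lambda>\<xi>. cis (\<psi> \<xi>))) \<le> 4 / \<delta>"
    proof (rule van_der_Corput_first_derivative_convex[OF am(2) \<delta>])
      fix \<xi> assume \<xi>: "\<xi> \<in> {m..b}"
      then have "\<xi> \<in> {a..b}" using am by auto
      then show "(\<psi> has_real_derivative \<psi>' \<xi>) (at \<xi>)" "(\<psi>' has_real_derivative \<psi>'' \<xi>) (at \<xi>)"
        and "\<psi>'' \<xi> \<ge> 0"
        using \<psi>' \<psi>'' curv[of \<xi>] \<open>\<mu> > 0\<close> by auto
      have "\<mu> * (\<xi> - a) \<le> \<psi>' \<xi> - \<psi>' a"
        using \<xi> am by (intro increment_ge_of_derivative_ge[OF \<psi>'' curv]) auto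
      moreover have "\<delta> \<le> \<mu> * (\<xi> - a)"
        using \<xi> \<open>\<mu> > 0\<close> by (simp add: m_def field_simps)
      ultimately show "\<delta> \<le> \<bar>\<psi>' \<xi>\<bar>" using start by linarith
    next
      show "continuous_on {m..b} \<psi>''" by (rule continuous_on_subset[OF cont]) (use am in auto)
    qed
    have split: "integral {a..b} (\<lambda>\<xi>. cis (\<psi> \<xi>))
        = integral {a..m} (\<lambda>\<xi>. cis (\<psi> \<xi>)) + integral {m..b} (\<lambda>\<xi>. cis (\<psi> \<xi>))"
      using am cont_\<psi>
      by (intro Henstock_Kurzweil_Integration.integral_combine[symmetric]) (auto intro!: integrable_continuous_real continuous_intros)
    show ?thesis
      unfolding split using near far balance
        norm_triangle_ineq[of "integral {a..m} (\<lambda>\<xi>. cis (\<psi> \<xi>))" "integral {m..b} (\<lambda>\<xi>. cis (\<psi> \<xi>))"]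
      by linarith
  qed
qed

lemma van_der_Corput_second_derivative_nonpos_end:
  fixes \<psi> \<psi>' \<psi>'' :: "real \<Rightarrow> real"
  assumes "a \<le> b" and "\<mu> > 0"
    and \<psi>': "\<And>\<xi>. \<xi> \<in> {a..b} \<Longrightarrow> (\<psi> has_real_derivative \<psi>' \<xi>) (at \<xi>)"
    and \<psi>'': "\<And>\<xi>. \<xi> \<in> {a..b} \<Longrightarrow> (\<psi>' has_real_derivative \<psi>'' \<xi>) (at \<xi>)"
    and cont: "continuous_on {a..b} \<psi>''"
    and curv: "\<And>\<xi>. \<xi> \<in> {a..b} \<Longrightarrow> \<mu> \<le> \<psi>'' \<xi>"
    and "end": "\<psi>' b \<le> 0"
  shows "norm (integral {a..b} (\<lambda>\<xi>. cis (\<psi> \<xi>))) \<le> 4 / sqrt \<mu>"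
proof -
  have "norm (integral {-b..-a} (\<lambda>\<xi>. cis (\<psi> (- \<xi>)))) \<le> 4 / sqrt \<mu>"
  proof (rule van_der_Corput_second_derivative_nonneg_start[OF _ \<open>\<mu> > 0\<close>,
        where \<psi>'="\<lambda>\<xi>. - \<psi>' (- \<xi>)" and \<psi>''="\<lambda>\<xi>. \<psi>'' (- \<xi>)"])
    fix \<xi> assume "\<xi> \<in> {-b..-a}"
    then have "- \<xi> \<in> {a..b}" by auto
    show "((\<lambda>\<xi>. \<psi> (- \<xi>)) has_real_derivative - \<psi>' (- \<xi>)) (at \<xi>)"
      using \<psi>'[OF \<open>- \<xi> \<in> {a..b}\<close>] by (simp add: DERIV_mirror)
    show "((\<lambda>\<xi>. - \<psi>' (- \<xi>)) has_real_derivative \<psi>'' (- \<xi>)) (at \<xi>)"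
      using DERIV_minus[OF \<psi>''[OF \<open>- \<xi> \<in> {a..b}\<close>, unfolded DERIV_mirror]] by simp
    show "\<mu> \<le> \<psi>'' (- \<xi>)" using curv[OF \<open>- \<xi> \<in> {a..b}\<close>] .
  next
    show "continuous_on {-b..-a} (\<lambda>\<xi>. \<psi>'' (- \<xi>))"
      by (rule continuous_on_compose2[OF cont]) (auto intro!: continuous_intros)
  qed (use \<open>a \<le> b\<close> "end" in auto)
  then show ?thesis using Henstock_Kurzweil_Integration.integral_reflect_real[where f="\<lambda>\<xi>. cis (\<psi> \<xi>)"] by simp
qed

lemma van_der_Corput_second_derivative_pos:
  fixes \<psi> \<psi>' \<psi>'' :: "real \<Rightarrow> real"
  assumes "a \<le> b" and "\<mu> > 0"
    and \<psi>': "\<And>\<xi>. \<xi> \<in> {a..b} \<Longrightarrow> (\<psi> has_real_derivative \<psi>' \<xi>) (at \<xi>)"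
    and \<psi>'': "\<And>\<xi>. \<xi> \<in> {a..b} \<Longrightarrow> (\<psi>' has_real_derivative \<psi>'' \<xi>) (at \<xi>)"
    and cont: "continuous_on {a..b} \<psi>''"
    and curv: "\<And>\<xi>. \<xi> \<in> {a..b} \<Longrightarrow> \<mu> \<le> \<psi>'' \<xi>"
  shows "norm (integral {a..b} (\<lambda>\<xi>. cis (\<psi> \<xi>))) \<le> 8 / sqrt \<mu>"
proof -
  have cont_\<psi>: "continuous_on {a..b} \<psi>" and cont_\<psi>': "continuous_on {a..b} \<psi>'"
    using \<psi>' \<psi>'' by (meson DERIV_isCont continuous_at_imp_continuous_on)+
  have half: "4 / sqrt \<mu> \<le> 8 / sqrt \<mu>" using \<open>\<mu> > 0\<close> by (simp add: divide_right_mono)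
  consider "\<psi>' a \<ge> 0" | "\<psi>' b \<le> 0" | c where "c \<in> {a..b}" "\<psi>' c = 0"
    using IVT'[of \<psi>' a 0 b] \<open>a \<le> b\<close> cont_\<psi>' by force
  then show ?thesis
  proof cases
    case 1
    then show ?thesis using van_der_Corput_second_derivative_nonneg_start[OF assms] half by linarith
  next
    case 2
    then show ?thesis using van_der_Corput_second_derivative_nonpos_end[OF assms] half by linarith
  next
    case 3
    then have sub: "{a..c} \<subseteq> {a..b}" "{c..b} \<subseteq> {a..b}" by auto
    have split: "integral {a..b} (\<lambda>\<xi>. cis (\<psi> \<xi>))
        = integral {a..c} (\<lambda>\<xi>. cis (\<psi> \<xi>)) + integral {c..b} (\<lambda>\<xi>. cis (\<psi> \<xi>))"
      by (rule Henstock_Kurzweil_Integration.integral_combine[symmetric])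
        (use 3 cont_\<psi> in \<open>auto intro!: integrable_continuous_real continuous_intros\<close>)
    have "norm (integral {a..c} (\<lambda>\<xi>. cis (\<psi> \<xi>))) \<le> 4 / sqrt \<mu>"
      by (rule van_der_Corput_second_derivative_nonpos_end[OF _ \<open>\<mu> > 0\<close>, where \<psi>'=\<psi>' and \<psi>''=\<psi>''])
        (use 3 sub \<psi>' \<psi>'' curv continuous_on_subset[OF cont sub(1)] in auto)
    moreover have "norm (integral {c..b} (\<lambda>\<xi>. cis (\<psi> \<xi>))) \<le> 4 / sqrt \<mu>"
      by (rule van_der_Corput_second_derivative_nonneg_start[OF _ \<open>\<mu> > 0\<close>, where \<psi>'=\<psi>' and \<psi>''=\<psi>''])
        (use 3 sub \<psi>' \<psi>'' curv continuous_on_subset[OF cont sub(2)] in auto)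
    ultimately show ?thesis
      unfolding split using norm_triangle_ineq[of "integral {a..c} (\<lambda>\<xi>. cis (\<psi> \<xi>))" "integral {c..b} (\<lambda>\<xi>. cis (\<psi> \<xi>))"]
      by linarith
  qed
qed

lemma van_der_Corput_second_derivative:
  fixes \<psi> \<psi>' \<psi>'' :: "real \<Rightarrow> real"
  assumes "a \<le> b" and "\<mu> > 0"
    and \<psi>': "\<And>\<xi>. \<xi> \<in> {a..b} \<Longrightarrow> (\<psi> has_real_derivative \<psi>' \<xi>) (at \<xi>)"
    and \<psi>'': "\<And>\<xi>. \<xi> \<in> {a..b} \<Longrightarrow> (\<psi>' has_real_derivative \<psi>'' \<xi>) (at \<xi>)"
    and cont: "continuous_on {a..b} \<psi>''"
    and curv: "(\<forall>\<xi>\<in>{a..b}. \<mu> \<le> \<psi>'' \<xi>) \<or> (\<forall>\<xi>\<in>{a..b}. \<psi>'' \<xi> \<le> - \<mu>)"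
  shows "norm (integral {a..b} (\<lambda>\<xi>. cis (\<psi> \<xi>))) \<le> 8 / sqrt \<mu>"
  using curv
proof
  assume "\<forall>\<xi>\<in>{a..b}. \<mu> \<le> \<psi>'' \<xi>"
  then show ?thesis using van_der_Corput_second_derivative_pos[OF assms(1-5)] by blast
next
  assume "\<forall>\<xi>\<in>{a..b}. \<psi>'' \<xi> \<le> - \<mu>"
  then have curv': "\<mu> \<le> - \<psi>'' \<xi>" if "\<xi> \<in> {a..b}" for \<xi> using that by force
  have "norm (integral {a..b} (\<lambda>\<xi>. cis (- \<psi> \<xi>))) \<le> 8 / sqrt \<mu>"
    by (rule van_der_Corput_second_derivative_pos[OF assms(1,2),
          where \<psi>'="\<lambda>\<xi>. - \<psi>' \<xi>" and \<psi>''="\<lambda>\<xi>. - \<psi>'' \<xi>"])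
      (use \<psi>' \<psi>'' cont curv' in \<open>auto intro!: derivative_intros continuous_intros\<close>)
  then show ?thesis by (simp only: norm_integral_cis_uminus)
qed

lemma A_const_ge:
  "1 \<le> A_const \<beta> \<gamma>" "\<bar>\<gamma> / (3*\<beta>)\<bar> powr (1/2) \<le> A_const \<beta> \<gamma>"
  unfolding A_const_def by (simp_all add: le_max_iff_disj)

lemma A_const_less_a_const: "A_const \<beta> \<gamma> < a_const \<beta> \<gamma>"
proof -
  define n where "n = nat \<lfloor>A_const \<beta> \<gamma>\<rfloor>"
  have n: "real_of_int \<lfloor>A_const \<beta> \<gamma>\<rfloor> = real n"
    using A_const_ge(1)[of \<beta> \<gamma>] by (simp add: n_def)
  have "n + 1 \<le> 2 ^ n" using less_exp[of n] by (simp add: Suc_le_eq)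
  then have "real n + 1 \<le> 2 ^ n" using of_nat_le_iff[of "n + 1" "2 ^ n", where 'a=real] by simp
  then show ?thesis
    using n by (simp add: a_const_def powr_realpow) linarith
qed

lemma one_less_a_const: "1 < a_const \<beta> \<gamma>"
  using A_const_less_a_const[of \<beta> \<gamma>] A_const_ge(1)[of \<beta> \<gamma>] by linarith

lemma a_const_pow4_gt: "\<bar>\<gamma>\<bar> / (3 * \<bar>\<beta>\<bar>) < (a_const \<beta> \<gamma>)^4"
proof -
  define s where "s = \<bar>\<gamma>\<bar> / (3 * \<bar>\<beta>\<bar>)"
  define a where "a = a_const \<beta> \<gamma>"
  have "\<bar>\<gamma> / (3*\<beta>)\<bar> powr (1/2) = sqrt s"
    by (simp add: s_def abs_div abs_mult powr_half_sqrt)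
  then have "sqrt s < a"
    using A_const_less_a_const[of \<beta> \<gamma>] A_const_ge(2)[of \<gamma> \<beta>] by (simp add: a_def)
  then have "(sqrt s)\<^sup>2 < a\<^sup>2" by (intro power_strict_mono) (auto simp: s_def)
  then have "s < a\<^sup>2" by (simp add: s_def)
  also have "a\<^sup>2 \<le> a^4"
    using one_less_a_const[of \<beta> \<gamma>] by (simp add: a_def power_increasing)
  finally show ?thesis by (simp add: s_def a_def)
qed

definition phase' :: "real \<Rightarrow> real \<Rightarrow> real \<Rightarrow> real" where
  "phase' \<beta> \<gamma> \<xi> = 3*\<beta>*\<xi>\<^sup>2 - \<gamma>/\<xi>\<^sup>2"

definition phase'' :: "real \<Rightarrow> real \<Rightarrow> real \<Rightarrow> real" where
  "phase'' \<beta> \<gamma> \<xi> = 6*\<beta>*\<xi> + 2*\<gamma>/\<xi>^3"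

lemma has_real_derivative_phase: "\<xi> \<noteq> 0 \<Longrightarrow> (phase \<beta> \<gamma> has_real_derivative phase' \<beta> \<gamma> \<xi>) (at \<xi>)"
  unfolding phase_def phase'_def
  by (auto intro!: derivative_eq_intros simp: field_simps power2_eq_square)

lemma has_real_derivative_phase': "\<xi> \<noteq> 0 \<Longrightarrow> (phase' \<beta> \<gamma> has_real_derivative phase'' \<beta> \<gamma> \<xi>) (at \<xi>)"
  unfolding phase'_def phase''_def
  by (auto intro!: derivative_eq_intros simp: field_simps power2_eq_square power3_eq_cube)

lemma continuous_on_phase'': "0 \<notin> S \<Longrightarrow> continuous_on S (phase'' \<beta> \<gamma>)"
  unfolding phase''_def by (auto intro!: continuous_intros)

lemma phase_uminus: "phase \<beta> \<gamma> (- \<xi>) = - phase \<beta> \<gamma> \<xi>"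
  unfolding phase_def by (simp add: power3_eq_cube)

definition curvature_const :: "real \<Rightarrow> real \<Rightarrow> real" where
  "curvature_const \<beta> \<gamma> = 6*\<bar>\<beta>\<bar> - 2*\<gamma>/(a_const \<beta> \<gamma>)^4"

definition slope_const :: "real \<Rightarrow> real \<Rightarrow> real" where
  "slope_const \<beta> \<gamma> = 48*\<bar>\<beta>\<bar> + \<bar>\<gamma>\<bar>"

lemma curvature_const_pos: "\<beta> \<noteq> 0 \<Longrightarrow> 0 < curvature_const \<beta> \<gamma>"
  using a_const_pow4_gt[of \<gamma> \<beta>] one_less_a_const[of \<beta> \<gamma>]
  by (simp add: curvature_const_def field_simps)

lemma phase''_le:
  assumes "\<beta> \<le> 0" and "\<gamma> \<ge> 0" and "a_const \<beta> \<gamma> \<le> \<xi>"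
  shows "phase'' \<beta> \<gamma> \<xi> \<le> - curvature_const \<beta> \<gamma> * \<xi>"
proof -
  define a where "a = a_const \<beta> \<gamma>"
  have "0 < a" "a \<le> \<xi>" using one_less_a_const[of \<beta> \<gamma>] assms(3) by (auto simp: a_def)
  then have "2*\<gamma> / \<xi>^4 \<le> 2*\<gamma> / a^4"
    using assms(2) by (intro divide_left_mono power_mono mult_pos_pos zero_less_power) auto
  then have "2*\<gamma> / \<xi>^4 * \<xi> \<le> 2*\<gamma> / a^4 * \<xi>"
    using \<open>0 < a\<close> \<open>a \<le> \<xi>\<close> by (intro mult_right_mono) auto
  moreover have "2*\<gamma> / \<xi>^4 * \<xi> = 2*\<gamma>/\<xi>^3"
    using \<open>0 < a\<close> \<open>a \<le> \<xi>\<close> by (simp add: power_eq_if)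
  moreover have "- curvature_const \<beta> \<gamma> * \<xi> = 6*\<beta>*\<xi> + 2*\<gamma> / a^4 * \<xi>"
    using assms(1) by (simp add: curvature_const_def a_def distrib_right)
  ultimately show ?thesis by (simp add: phase''_def)
qed

lemma abs_phase'_le:
  assumes "1 \<le> N" and "N \<le> \<xi>" and "\<xi> \<le> 4*N"
  shows "\<bar>phase' \<beta> \<gamma> \<xi>\<bar> \<le> slope_const \<beta> \<gamma> * N\<^sup>2"
proof -
  have "\<xi>\<^sup>2 \<le> 16 * N\<^sup>2"
    using power_mono[of \<xi> "4*N" 2] assms by (simp add: power_mult_distrib)
  then have "3*\<bar>\<beta>\<bar>*\<xi>\<^sup>2 \<le> 48*\<bar>\<beta>\<bar>*N\<^sup>2"
    using mult_left_mono[of "\<xi>\<^sup>2" "16 * N\<^sup>2" "\<bar>\<beta>\<bar>"] by simp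
  moreover have "\<bar>\<gamma>\<bar>/\<xi>\<^sup>2 \<le> \<bar>\<gamma>\<bar>/1"
    using assms one_le_power[of \<xi> 2] by (intro divide_left_mono) auto
  moreover have "\<bar>\<gamma>\<bar> * 1 \<le> \<bar>\<gamma>\<bar> * N\<^sup>2"
    using assms one_le_power[of N 2] by (intro mult_left_mono) auto
  moreover have "\<bar>phase' \<beta> \<gamma> \<xi>\<bar> \<le> 3*\<bar>\<beta>\<bar>*\<xi>\<^sup>2 + \<bar>\<gamma>\<bar>/\<xi>\<^sup>2"
    unfolding phase'_def using abs_triangle_ineq4[of "3*\<beta>*\<xi>\<^sup>2" "\<gamma>/\<xi>\<^sup>2"]
    by (simp add: abs_mult)
  ultimately show ?thesis by (simp add: slope_const_def distrib_right)
qed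

definition half_kernel :: "real \<Rightarrow> real \<Rightarrow> real \<Rightarrow> real \<Rightarrow> real \<Rightarrow> complex" where
  "half_kernel \<beta> \<gamma> N x t = integral {N..4*N} (\<lambda>\<xi>. cis (x*\<xi> - t * phase \<beta> \<gamma> \<xi>))"

definition decay_const :: "real \<Rightarrow> real \<Rightarrow> real" where
  "decay_const \<beta> \<gamma> = 8 + 8 * sqrt (2 * slope_const \<beta> \<gamma> / curvature_const \<beta> \<gamma>)"

lemma decay_const_nonneg: "\<beta> \<noteq> 0 \<Longrightarrow> 0 \<le> decay_const \<beta> \<gamma>"
  using curvature_const_pos[of \<beta> \<gamma>] by (simp add: decay_const_def slope_const_def)

locale large_frequency =
  fixes \<beta> \<gamma> N :: real
  assumes \<beta>: "\<beta> < 0" and \<gamma>: "\<gamma> > 0" and N: "a_const \<beta> \<gamma> \<le> N"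
begin

lemma one_less_N: "1 < N"
  using N one_less_a_const[of \<beta> \<gamma>] by linarith

lemma curvature_pos: "0 < curvature_const \<beta> \<gamma>"
  using curvature_const_pos \<beta> by simp

lemma slope_pos: "0 < slope_const \<beta> \<gamma>"
  using \<beta> by (simp add: slope_const_def add_pos_nonneg)

lemma has_real_derivative_half_kernel_phase:
  assumes "\<xi> \<in> {N..4*N}"
  shows "((\<lambda>\<xi>. x*\<xi> - t * phase \<beta> \<gamma> \<xi>) has_real_derivative x - t * phase' \<beta> \<gamma> \<xi>) (at \<xi>)"
    and "((\<lambda>\<xi>. x - t * phase' \<beta> \<gamma> \<xi>) has_real_derivative - t * phase'' \<beta> \<gamma> \<xi>) (at \<xi>)"
  using assms one_less_N has_real_derivative_phase[of \<xi> \<beta> \<gamma>] has_real_derivative_phase'[of \<xi> \<beta> \<gamma>]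
  by (auto intro!: derivative_eq_intros)

lemma continuous_on_half_kernel_phase'': "continuous_on {N..4*N} (\<lambda>\<xi>. - t * phase'' \<beta> \<gamma> \<xi>)"
proof -
  have "0 \<notin> {N..4*N}" using one_less_N by auto
  then show ?thesis by (intro continuous_intros continuous_on_phase'')
qed

lemma continuous_on_half_kernel_phase: "continuous_on {N..4*N} (\<lambda>\<xi>. x*\<xi> - t * phase \<beta> \<gamma> \<xi>)"
  by (rule continuous_at_imp_continuous_on)
    (use has_real_derivative_half_kernel_phase(1) DERIV_isCont in blast)

lemma phase''_le_on_support:
  assumes "\<xi> \<in> {N..4*N}"
  shows "phase'' \<beta> \<gamma> \<xi> \<le> - curvature_const \<beta> \<gamma> * N"
proof -
  have "curvature_const \<beta> \<gamma> * N \<le> curvature_const \<beta> \<gamma> * \<xi>"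
    using assms curvature_pos by (intro mult_left_mono) auto
  then show ?thesis using phase''_le[of \<beta> \<gamma> \<xi>] assms N \<beta> \<gamma> by auto
qed

lemma norm_half_kernel_le: "norm (half_kernel \<beta> \<gamma> N x t) \<le> 3 * N"
  using norm_integral_cis_le_length[OF _ continuous_on_half_kernel_phase, of x t] one_less_N
  by (simp add: half_kernel_def)

lemma norm_half_kernel_le_curvature:
  assumes "t \<noteq> 0"
  shows "norm (half_kernel \<beta> \<gamma> N x t) \<le> 8 / sqrt (\<bar>t\<bar> * curvature_const \<beta> \<gamma> * N)"
  unfolding half_kernel_def
proof (rule van_der_Corput_second_derivative[OF _ _ has_real_derivative_half_kernel_phase
      continuous_on_half_kernel_phase''])
  show "N \<le> 4 * N" "0 < \<bar>t\<bar> * curvature_const \<beta> \<gamma> * N"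
    using assms one_less_N curvature_pos by auto
  show "(\<forall>\<xi>\<in>{N..4*N}. \<bar>t\<bar> * curvature_const \<beta> \<gamma> * N \<le> - t * phase'' \<beta> \<gamma> \<xi>) \<or>
      (\<forall>\<xi>\<in>{N..4*N}. - t * phase'' \<beta> \<gamma> \<xi> \<le> - (\<bar>t\<bar> * curvature_const \<beta> \<gamma> * N))"
  proof (cases "t > 0")
    case True
    have "t * (curvature_const \<beta> \<gamma> * N) \<le> t * - phase'' \<beta> \<gamma> \<xi>" if "\<xi> \<in> {N..4*N}" for \<xi>
      using phase''_le_on_support[OF that] True by (intro mult_left_mono) auto
    then show ?thesis using True by (simp add: mult.assoc)
  next
    case False
    have "- t * phase'' \<beta> \<gamma> \<xi> \<le> - t * (- curvature_const \<beta> \<gamma> * N)" if "\<xi> \<in> {N..4*N}" for \<xi>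
      using phase''_le_on_support[OF that] False by (intro mult_left_mono) auto
    then show ?thesis using False assms by (simp add: mult.assoc)
  qed
qed

lemma norm_half_kernel_le_slope:
  assumes "x \<noteq> 0" and small: "\<bar>t\<bar> * slope_const \<beta> \<gamma> * N\<^sup>2 \<le> \<bar>x\<bar> / 2"
  shows "norm (half_kernel \<beta> \<gamma> N x t) \<le> 8 / \<bar>x\<bar>"
proof -
  have "norm (half_kernel \<beta> \<gamma> N x t) \<le> 4 / (\<bar>x\<bar> / 2)"
    unfolding half_kernel_def
  proof (rule van_der_Corput_first_derivative[OF _ _ has_real_derivative_half_kernel_phase
        continuous_on_half_kernel_phase''])
    show "N \<le> 4 * N" "0 < \<bar>x\<bar> / 2" using assms(1) one_less_N by auto
    have "phase'' \<beta> \<gamma> \<xi> \<le> 0" if "\<xi> \<in> {N..4*N}" for \<xi>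
      using phase''_le_on_support[OF that] mult_pos_pos[OF curvature_pos, of N] one_less_N
      by linarith
    then show "(\<forall>\<xi>\<in>{N..4*N}. 0 \<le> - t * phase'' \<beta> \<gamma> \<xi>) \<or> (\<forall>\<xi>\<in>{N..4*N}. - t * phase'' \<beta> \<gamma> \<xi> \<le> 0)"
      by (cases "t \<ge> 0") (auto simp: mult_nonneg_nonpos mult_nonpos_nonpos)
    fix \<xi> assume "\<xi> \<in> {N..4*N}"
    then have "\<bar>t\<bar> * \<bar>phase' \<beta> \<gamma> \<xi>\<bar> \<le> \<bar>t\<bar> * (slope_const \<beta> \<gamma> * N\<^sup>2)"
      using abs_phase'_le[of N \<xi>] one_less_N by (intro mult_left_mono) auto
    then have "\<bar>t * phase' \<beta> \<gamma> \<xi>\<bar> \<le> \<bar>x\<bar> / 2" using small by (simp add: abs_mult mult.assoc)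
    then show "\<bar>x\<bar> / 2 \<le> \<bar>x - t * phase' \<beta> \<gamma> \<xi>\<bar>" by linarith
  qed
  then show ?thesis by simp
qed

lemma norm_half_kernel_decay:
  assumes "1 \<le> N * \<bar>x\<bar>"
  shows "norm (half_kernel \<beta> \<gamma> N x t) \<le> decay_const \<beta> \<gamma> * N / sqrt (N * \<bar>x\<bar>)"
proof -
  define M c y where "M = slope_const \<beta> \<gamma>" and "c = curvature_const \<beta> \<gamma>" and "y = N * \<bar>x\<bar>"
  have "x \<noteq> 0" "1 \<le> y" using assms by (auto simp: y_def)
  have pos: "0 < M" "0 < c" "0 < N" "0 < sqrt y"
    using slope_pos curvature_pos one_less_N \<open>1 \<le> y\<close> by (auto simp: M_def c_def)
  have decay: "decay_const \<beta> \<gamma> * N / sqrt y = 8 * N / sqrt y + 8 * sqrt (2*M/c) * N / sqrt y"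
    by (simp add: decay_const_def M_def c_def add_divide_distrib distrib_right)
  show ?thesis
  proof (cases "\<bar>t\<bar> * M * N\<^sup>2 \<le> \<bar>x\<bar> / 2")
    case True
    have "sqrt y \<le> y" using \<open>1 \<le> y\<close> by (intro real_le_lsqrt) (auto simp: power2_eq_square)
    have "norm (half_kernel \<beta> \<gamma> N x t) \<le> 8 / \<bar>x\<bar>"
      using norm_half_kernel_le_slope[OF \<open>x \<noteq> 0\<close>] True by (simp add: M_def)
    also have "\<dots> = 8 * N / y" using pos by (simp add: y_def)
    also have "\<dots> \<le> 8 * N / sqrt y"
      using \<open>sqrt y \<le> y\<close> pos by (intro divide_left_mono) auto
    finally show ?thesis
      using decay pos unfolding y_def by (smt (verit) divide_nonneg_pos mult_nonneg_nonneg real_sqrt_ge_zero)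
  next
    case False
    then have "t \<noteq> 0" using \<open>x \<noteq> 0\<close> by auto
    define v where "v = c * y / (2 * M * N\<^sup>2)"
    have "\<bar>x\<bar> / (2 * M * N\<^sup>2) \<le> \<bar>t\<bar>"
      using False pos by (simp add: field_simps)
    then have "\<bar>x\<bar> / (2 * M * N\<^sup>2) * (c * N) \<le> \<bar>t\<bar> * (c * N)"
      using pos by (intro mult_right_mono) auto
    then have "v \<le> \<bar>t\<bar> * c * N"
      using pos by (simp add: v_def y_def power2_eq_square field_simps)
    moreover have "0 < v" using pos \<open>1 \<le> y\<close> by (simp add: v_def)
    ultimately have "norm (half_kernel \<beta> \<gamma> N x t) \<le> 8 / sqrt v"
      using norm_half_kernel_le_curvature[OF \<open>t \<noteq> 0\<close>, of x]
      by (smt (verit) c_def divide_left_mono mult_pos_pos real_sqrt_gt_zero real_sqrt_le_mono)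
    also have "8 / sqrt v = 8 * sqrt (2*M/c) * N / sqrt y"
    proof -
      have "sqrt v * sqrt (2*M/c) = sqrt (y / N\<^sup>2)"
        unfolding real_sqrt_mult[symmetric] v_def using pos by (simp add: field_simps)
      also have "\<dots> = sqrt y / N" using pos by (simp add: real_sqrt_divide)
      finally show ?thesis using pos \<open>0 < v\<close> by (simp add: field_simps)
    qed
    finally show ?thesis
      using decay pos unfolding y_def by (smt (verit) divide_nonneg_pos)
  qed
qed

lemma kernelK_eq_half_kernels:
  "kernelK \<beta> \<gamma> N x t = half_kernel \<beta> \<gamma> N x t + half_kernel \<beta> \<gamma> N (- x) (- t)"
proof -
  define g where "g \<xi> = cis (x*\<xi> - t * phase \<beta> \<gamma> \<xi>)" for \<xi>
  define S where "S = {\<xi>::real. N \<le> \<bar>\<xi>\<bar> \<and> \<bar>\<xi>\<bar> \<le> 4*N}"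
  have S: "S = {-4*N..-N} \<union> {N..4*N}" and "0 \<notin> S"
    using one_less_N by (auto simp: S_def)
  have cont: "continuous_on S g"
    unfolding g_def phase_def using \<open>0 \<notin> S\<close> by (auto intro!: continuous_intros)
  have "set_integrable lborel S g"
    unfolding set_integrable_def by (rule borel_integrable_compact) (use cont S in auto)
  have "kernelK \<beta> \<gamma> N x t = (LINT \<xi>|lborel. indicator S \<xi> *\<^sub>R g \<xi>)"
    unfolding kernelK_def S_def g_def cis_conv_exp by (simp add: algebra_simps)
  also have "\<dots> = integral S g"
    using set_borel_integral_eq_integral(2)[OF \<open>set_integrable lborel S g\<close>]
    unfolding set_lebesgue_integral_def .
  also have "\<dots> = integral {-4*N..-N} g + integral {N..4*N} g"
  proof (rule integral_unique)
    have left: "(g has_integral integral {-4*N..-N} g) {-4*N..-N}"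
      and right: "(g has_integral integral {N..4*N} g) {N..4*N}"
      using cont by (auto simp: S intro!: integrable_continuous_real intro: continuous_on_subset)
    have "{-4*N..-N} \<inter> {N..4*N} = {}" using one_less_N by auto
    then show "(g has_integral integral {-4*N..-N} g + integral {N..4*N} g) S"
      unfolding S using has_integral_Un[OF left right] by simp
  qed
  also have "integral {-4*N..-N} g = integral {N..4*N} (\<lambda>\<xi>. g (- \<xi>))"
    using Henstock_Kurzweil_Integration.integral_reflect_real[of "4*N" N "\<lambda>\<xi>. g (- \<xi>)"] by simp
  finally show ?thesis by (simp add: half_kernel_def g_def phase_uminus add.commute)
qed

end

definition kernel_majorant :: "real \<Rightarrow> real \<Rightarrow> real" where
  "kernel_majorant C y = (if \<bar>y\<bar> < 1 then 6 else 2 * C / sqrt \<bar>y\<bar>)"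

lemma kernel_majorant_measurable: "kernel_majorant C \<in> borel_measurable borel"
  unfolding kernel_majorant_def by measurable

lemma (in large_frequency) norm_kernelK_le_majorant:
  "norm (kernelK \<beta> \<gamma> N x t) \<le> N * kernel_majorant (decay_const \<beta> \<gamma>) (N * x)"
proof -
  have "0 < N" using one_less_N by simp
  have triangle: "norm (kernelK \<beta> \<gamma> N x t)
      \<le> norm (half_kernel \<beta> \<gamma> N x t) + norm (half_kernel \<beta> \<gamma> N (- x) (- t))"
    unfolding kernelK_eq_half_kernels by (rule norm_triangle_ineq)
  show ?thesis
  proof (cases "N * \<bar>x\<bar> < 1")
    case True
    then show ?thesis
      using triangle norm_half_kernel_le[of x t] norm_half_kernel_le[of "- x" "- t"] \<open>0 < N\<close>
      by (simp add: kernel_majorant_def abs_mult)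
  next
    case False
    have "N * kernel_majorant (decay_const \<beta> \<gamma>) (N * x)
        = decay_const \<beta> \<gamma> * N / sqrt (N * \<bar>x\<bar>) + decay_const \<beta> \<gamma> * N / sqrt (N * \<bar>x\<bar>)"
      using False \<open>0 < N\<close> by (simp add: kernel_majorant_def abs_mult)
    moreover have "1 \<le> N * \<bar>x\<bar>" "1 \<le> N * \<bar>- x\<bar>" using False by auto
    ultimately show ?thesis
      using triangle norm_half_kernel_decay[of x t] norm_half_kernel_decay[of "- x" "- t"]
      by (simp only: abs_minus_cancel) linarith
  qed
qed

lemma kernelK_measurable: "(\<lambda>t. kernelK \<beta> \<gamma> N x t) \<in> borel_measurable lborel"
  unfolding kernelK_def phase_def by measurable

lemma nn_integral_indicator_powr_tail:
  fixes e :: real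
  assumes "e < -1"
  shows "(\<integral>\<^sup>+ y. ennreal (indicator {1..} y * y powr e) \<partial>lborel) = ennreal (- 1 / (e + 1))"
proof (rule nn_integral_has_integral_lborel)
  have "((\<lambda>y. y powr e) has_integral (- 1 / (e + 1))) {1..}"
    using has_integral_powr_to_inf[OF assms zero_less_one] by simp
  moreover have "(\<lambda>y. indicator {1..} y * y powr e) = (\<lambda>y. if y \<in> {1..} then y powr e else 0)"
    by (auto simp: indicator_def)
  ultimately show "((\<lambda>y. indicator {1..} y * y powr e) has_integral (- 1 / (e + 1))) UNIV"
    by (simp only: has_integral_restrict_UNIV)
qed (auto simp: indicator_def)

lemma nn_integral_kernel_majorant_powr_finite:
  assumes "0 \<le> C" and "2 < q"
  shows "(\<integral>\<^sup>+ y. ennreal (kernel_majorant C y powr q) \<partial>lborel) < \<infinity>"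
proof -
  define e where "e = - q / 2"
  define tail where "tail y = ennreal ((2 * C) powr q) * ennreal (indicator {1..} y * y powr e)" for y
  define core where "core y = ennreal (6 powr q) * indicator {-1..1} y" for y :: real
  have "e < -1" using assms(2) by (simp add: e_def)
  have bound: "ennreal (kernel_majorant C y powr q) \<le> core y + (tail y + tail (- y))" for y
  proof (cases "\<bar>y\<bar> < 1")
    case True
    then show ?thesis by (auto simp: kernel_majorant_def core_def indicator_def)
  next
    case False
    have "kernel_majorant C y powr q = (2 * C) powr q * \<bar>y\<bar> powr e"
      using False assms
      by (simp add: kernel_majorant_def e_def powr_divide powr_minus_divide
          powr_half_sqrt[symmetric] powr_powr)
    also have "ennreal \<dots> \<le> tail y + tail (- y)"
      using False by (cases "y \<ge> 1") (auto simp: tail_def ennreal_mult'[symmetric])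
    finally show ?thesis by (simp add: add_increasing)
  qed
  have meas: "core \<in> borel_measurable borel" "tail \<in> borel_measurable borel"
    unfolding core_def tail_def by measurable
  have "(\<integral>\<^sup>+ y. ennreal (kernel_majorant C y powr q) \<partial>lborel)
      \<le> (\<integral>\<^sup>+ y. core y + (tail y + tail (- y)) \<partial>lborel)"
    by (rule nn_integral_mono) (rule bound)
  also have "\<dots> = integral\<^sup>N lborel core + (integral\<^sup>N lborel tail + (\<integral>\<^sup>+ y. tail (- y) \<partial>lborel))"
    using meas by (simp add: nn_integral_add)
  also have "(\<integral>\<^sup>+ y. tail (- y) \<partial>lborel) = integral\<^sup>N lborel tail"
    using nn_integral_real_affine[OF meas(2), of "-1" 0] by simp
  also have "integral\<^sup>N lborel core = ennreal (6 powr q) * 2"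
    unfolding core_def by (simp add: nn_integral_cmult_indicator)
  also have "integral\<^sup>N lborel tail = ennreal ((2 * C) powr q) * ennreal (- 1 / (e + 1))"
    unfolding tail_def by (simp add: nn_integral_cmult nn_integral_indicator_powr_tail[OF \<open>e < -1\<close>])
  finally show ?thesis
    by (rule le_less_trans) (simp add: ennreal_mult_less_top)
qed

lemma Linf_t_bounded:
  assumes "(\<lambda>t. f x t) \<in> borel_measurable lborel" and "\<And>t. norm (f x t) \<le> B"
  shows "Linf_t f x < \<infinity>" and "0 \<le> real_of_ereal (Linf_t f x)" and "real_of_ereal (Linf_t f x) \<le> B"
proof -
  have "Linf_t f x \<le> ereal B"
    unfolding Linf_t_def by (rule esssup_I) (use assms in auto)
  moreover have "esssup lborel (\<lambda>t::real. 0::ereal) \<le> Linf_t f x"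
    unfolding Linf_t_def by (rule esssup_mono) auto
  then have "0 \<le> Linf_t f x" by (simp add: esssup_const)
  ultimately obtain r where "Linf_t f x = ereal r" "0 \<le> r" "r \<le> B"
    by (cases "Linf_t f x") auto
  then show "Linf_t f x < \<infinity>" "0 \<le> real_of_ereal (Linf_t f x)" "real_of_ereal (Linf_t f x) \<le> B"
    by auto
qed

lemma nn_integral_Linf_t_powr_le:
  fixes f :: "real \<Rightarrow> real \<Rightarrow> complex" and g :: "real \<Rightarrow> real"
  assumes meas: "\<And>x. (\<lambda>t. f x t) \<in> borel_measurable lborel"
    and bound: "\<And>x t. norm (f x t) \<le> N * g (N * x)"
    and g: "g \<in> borel_measurable borel" and "0 < N" and "0 \<le> q"
  shows "(\<integral>\<^sup>+ x. ennreal (real_of_ereal (Linf_t f x) powr q) \<partial>lborel)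
      \<le> ennreal (N powr (q - 1)) * (\<integral>\<^sup>+ y. ennreal (g y powr q) \<partial>lborel)"
proof -
  have g_nonneg: "0 \<le> g (N * x)" for x
  proof -
    have "0 \<le> N * g (N * x)" using order_trans[OF norm_ge_zero bound] .
    then show ?thesis using \<open>0 < N\<close> by (simp add: zero_le_mult_iff)
  qed
  have "(\<integral>\<^sup>+ x. ennreal (real_of_ereal (Linf_t f x) powr q) \<partial>lborel)
      \<le> (\<integral>\<^sup>+ x. ennreal (N powr q) * ennreal (g (N * x) powr q) \<partial>lborel)"
  proof (rule nn_integral_mono)
    fix x
    have "real_of_ereal (Linf_t f x) powr q \<le> (N * g (N * x)) powr q"
      using Linf_t_bounded[OF meas bound] \<open>0 \<le> q\<close> by (intro powr_mono2) auto
    also have "\<dots> = N powr q * g (N * x) powr q"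
      using \<open>0 < N\<close> g_nonneg by (simp add: powr_mult)
    finally show "ennreal (real_of_ereal (Linf_t f x) powr q) \<le> ennreal (N powr q) * ennreal (g (N * x) powr q)"
      by (simp add: ennreal_mult[symmetric] ennreal_leI)
  qed
  also have "\<dots> = ennreal (N powr (q - 1)) * (ennreal N * (\<integral>\<^sup>+ x. ennreal (g (N * x) powr q) \<partial>lborel))"
  proof -
    have "ennreal (N powr q) = ennreal (N powr (q - 1)) * ennreal N"
      using \<open>0 < N\<close> by (simp add: powr_diff ennreal_mult[symmetric])
    then show ?thesis
      using g by (simp add: nn_integral_cmult mult.assoc)
  qed
  also have "ennreal N * (\<integral>\<^sup>+ x. ennreal (g (N * x) powr q) \<partial>lborel) = (\<integral>\<^sup>+ y. ennreal (g y powr q) \<partial>lborel)"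
    using nn_integral_real_affine[of "\<lambda>y. ennreal (g y powr q)" N 0] g \<open>0 < N\<close> by simp
  finally show ?thesis .
qed

lemma norm_Lr_Linf_le_scaled:
  fixes f :: "real \<Rightarrow> real \<Rightarrow> complex" and g :: "real \<Rightarrow> real"
  assumes meas: "\<And>x. (\<lambda>t. f x t) \<in> borel_measurable lborel"
    and bound: "\<And>x t. norm (f x t) \<le> N * g (N * x)"
    and g: "g \<in> borel_measurable borel" and "0 < N" and "0 < q"
    and finite: "(\<integral>\<^sup>+ y. ennreal (g y powr q) \<partial>lborel) < \<infinity>"
  shows "norm_Lr_Linf q f
      \<le> ereal (enn2real (\<integral>\<^sup>+ y. ennreal (g y powr q) \<partial>lborel) powr (1/q) * N powr ((q - 1) / q))"
proof -
  define I where "I = (\<integral>\<^sup>+ x. ennreal (real_of_ereal (Linf_t f x) powr q) \<partial>lborel)"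
  define G where "G = enn2real (\<integral>\<^sup>+ y. ennreal (g y powr q) \<partial>lborel)"
  have "I \<le> ennreal (N powr (q - 1) * G)"
    using nn_integral_Linf_t_powr_le[OF meas bound g \<open>0 < N\<close>] \<open>0 < q\<close> finite
    by (simp add: I_def G_def ennreal_mult)
  then have "I < \<infinity>" and "enn2real I \<le> N powr (q - 1) * G"
    using enn2real_mono[of I "ennreal (N powr (q - 1) * G)"] by (auto simp: G_def le_less_trans)
  moreover have "AE x in lborel. Linf_t f x < \<infinity>"
    using Linf_t_bounded(1)[OF meas bound] by simp
  ultimately have "norm_Lr_Linf q f \<le> ereal ((N powr (q - 1) * G) powr (1/q))"
    using \<open>0 < q\<close> by (simp add: norm_Lr_Linf_def I_def[symmetric] powr_mono2)
  also have "(N powr (q - 1) * G) powr (1/q) = G powr (1/q) * N powr ((q - 1) / q)"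
    using \<open>0 < N\<close> by (simp add: G_def powr_mult powr_powr)
  finally show ?thesis by (simp add: G_def)
qed

theorem lemma2p8:
  fixes \<beta> \<gamma> p :: real
  assumes "\<beta> < 0" and "\<gamma> > 0" and "p \<ge> 7"
  shows "\<exists>C::real. \<forall>N::real. (\<exists>k::int. N = 2 powr (real_of_int k)) \<and> N \<ge> a_const \<beta> \<gamma> \<longrightarrow>
           norm_Lr_Linf (p/2) (kernelK \<beta> \<gamma> N) \<le> ereal (C * N powr ((p-2)/p))"
proof -
  define G where "G = (\<integral>\<^sup>+ y. ennreal (kernel_majorant (decay_const \<beta> \<gamma>) y powr (p/2)) \<partial>lborel)"
  have "0 \<le> decay_const \<beta> \<gamma>" using decay_const_nonneg assms(1) by simp
  then have "G < \<infinity>"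
    using nn_integral_kernel_majorant_powr_finite assms(3) by (simp add: G_def)
  have exponent: "(p/2 - 1) / (p/2) = (p-2)/p"
    using assms(3) by (simp add: field_simps)
  show ?thesis
  proof (intro exI[of _ "enn2real G powr (1 / (p/2))"] allI impI)
    fix N assume "(\<exists>k::int. N = 2 powr real_of_int k) \<and> a_const \<beta> \<gamma> \<le> N"
    then interpret large_frequency \<beta> \<gamma> N
      using assms by unfold_locales auto
    show "norm_Lr_Linf (p/2) (kernelK \<beta> \<gamma> N) \<le> ereal (enn2real G powr (1 / (p/2)) * N powr ((p-2)/p))"
      using norm_Lr_Linf_le_scaled[OF kernelK_measurable norm_kernelK_le_majorant
          kernel_majorant_measurable _ _ \<open>G < \<infinity>\<close>[unfolded G_def]] one_less_N assms(3)
      by (simp add: G_def exponent)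
  qed
qed

end
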